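(* Let $p,q\in(1,\infty)$ and $p'=\frac p{p-1}$. Then the Laplace transform $L:L^{p,q}(0,\infty)\to L^{p',q}(0,\infty)$ is not strictly singular.
   Context: Laplace transform: $Lf(t)=\int_0^\infty f(s)e^{-ts}\,ds$, $t\in(0,\infty)$; it is bounded $L^{p,q}(0,\infty)\to L^{p',q}(0,\infty)$. Lorentz space $L^{p,q}(0,\infty)$: measurable $f$ with $\|f\|_{p,q}=\big(\int_0^\infty(t^{1/p}f^*(t))^q\frac{dt}t\big)^{1/q}<\infty$, $f^*$ the nonincreasing rearrangement. A bounded linear operator $T:X\to Y$ is strictly singular if there is no infinite-dimensional subspace $Z\subseteq X$ such that $T|_Z$ is an isomorphism onto $T(Z)$. *)

theory Defs
  imports "HOL-Analysis.Analysis"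
begin

text \<open>All functions are real-valued and only their values on (0,infinity) matter.\<close>

definition pos_measure :: "real measure" where
  "pos_measure = restrict_space lborel {0<..}"

definition distrib_fun :: "(real \<Rightarrow> real) \<Rightarrow> ennreal \<Rightarrow> ennreal" where
  "distrib_fun f s = emeasure lborel {x. 0 < x \<and> s < ennreal \<bar>f x\<bar>}"

definition rearr :: "(real \<Rightarrow> real) \<Rightarrow> real \<Rightarrow> ennreal" where
  "rearr f t = Inf {s::ennreal. distrib_fun f s \<le> ennreal t}"

definition lorentz_integral :: "real \<Rightarrow> real \<Rightarrow> (real \<Rightarrow> real) \<Rightarrow> ennreal" where
  "lorentz_integral p q f =
     (\<integral>\<^sup>+ t. indicator {0<..} t *
        (if rearr f t = \<infinity> then \<infinity>
         else ennreal ((t powr (1/p) * enn2real (rearr f t)) powr q / t)) \<partial>lborel)"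

definition lorentz_norm :: "real \<Rightarrow> real \<Rightarrow> (real \<Rightarrow> real) \<Rightarrow> real" where
  "lorentz_norm p q f = enn2real (lorentz_integral p q f) powr (1/q)"

definition lorentz_space :: "real \<Rightarrow> real \<Rightarrow> (real \<Rightarrow> real) set" where
  "lorentz_space p q = {f. f \<in> borel_measurable pos_measure \<and> lorentz_integral p q f < \<infinity>}"

definition laplace :: "(real \<Rightarrow> real) \<Rightarrow> real \<Rightarrow> real" where
  "laplace f t = (LINT s:{0<..}|lborel. f s * exp (- t * s))"

text \<open>Linear subspaces of a function space and infinite dimensionality, where functions
  are identified when they agree almost everywhere on (0,infinity).\<close>
definition fun_subspace :: "(real \<Rightarrow> real) set \<Rightarrow> bool" where
  "fun_subspace Z \<longleftrightarrow> (\<lambda>x. 0) \<in> Z \<and>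
     (\<forall>f\<in>Z. \<forall>g\<in>Z. (\<lambda>x. f x + g x) \<in> Z) \<and> (\<forall>c. \<forall>f\<in>Z. (\<lambda>x. c * f x) \<in> Z)"

definition infinite_dim_ae :: "(real \<Rightarrow> real) set \<Rightarrow> bool" where
  "infinite_dim_ae Z \<longleftrightarrow> (\<forall>n::nat. \<exists>fs::nat \<Rightarrow> real \<Rightarrow> real. (\<forall>i<n. fs i \<in> Z) \<and>
      (\<forall>c::nat \<Rightarrow> real. (AE x in pos_measure. (\<Sum>i<n. c i * fs i x) = 0) \<longrightarrow> (\<forall>i<n. c i = 0)))"

text \<open>T : X \<rightarrow> Y (with quasinorms nX, nY) is strictly singular iff there is no infinite
  dimensional subspace Z of X such that T restricted to Z is an isomorphism onto T(Z).\<close>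
definition strictly_singular ::
  "(real \<Rightarrow> real) set \<Rightarrow> ((real \<Rightarrow> real) \<Rightarrow> real) \<Rightarrow> (real \<Rightarrow> real) set \<Rightarrow> ((real \<Rightarrow> real) \<Rightarrow> real)
     \<Rightarrow> ((real \<Rightarrow> real) \<Rightarrow> (real \<Rightarrow> real)) \<Rightarrow> bool" where
  "strictly_singular X nX Y nY T \<longleftrightarrow>
     \<not> (\<exists>Z. Z \<subseteq> X \<and> fun_subspace Z \<and> infinite_dim_ae Z \<and> (\<forall>f\<in>Z. T f \<in> Y) \<and>
          (\<exists>c>0. \<exists>C. \<forall>f\<in>Z. c * nX f \<le> nY (T f) \<and> nY (T f) \<le> C * nX f))"

end

theory Submission
  imports Defs
begin

text \<open>
  Let e_k = a_k^(-1/p) * indicator [a_k, 2 a_k] for the lacunary scales a_k = R^k with R large.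
  On the span of the e_k, both the (p,q) Lorentz functional of f = \<Sum> c_k e_k and the (p',q)
  Lorentz functional of L f are comparable to \<Sum> |c_k|^q, so L is an isomorphism on this
  infinite-dimensional subspace.
  Upper bounds: f and L f are dominated by nonincreasing sums of dilated profiles
  \<mu>^(1/r) min 1 (1/(\<mu> x)), so Jensen's inequality, the dilation invariance of dt/t and the
  lacunarity of the dilations bound their Lorentz functionals.
  Lower bounds: f equals c_k a_k^(-1/p) on a set of measure a_k, and on [1/(2 a_k), 1/a_k]
  the transform L e_k dominates every L e_j, j \<noteq> k, up to errors decaying like 1000^(-|j-k|);
  these are absorbed by an almost-diagonal estimate in \<ell>^q.
\<close>

section \<open>Elementary inequalities\<close>

lemma convex_on_powr_nonneg:
  assumes "1 \<le> q"
  shows "convex_on {0..} (\<lambda>x::real. x powr q)"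
proof (rule convex_onI)
  fix t x y :: real assume t: "0 < t" "t < 1" and x: "x \<in> {0..}" and y: "y \<in> {0..}"
  have scale: "(s * z) powr q \<le> s * z powr q" if "0 < s" "s < 1" "0 \<le> z" for s z :: real
    using that assms by (simp add: powr_mult mult_right_mono powr_le_one_le)
  show "((1 - t) *\<^sub>R x + t *\<^sub>R y) powr q \<le> (1 - t) * x powr q + t * y powr q"
  proof (cases "x = 0 \<or> y = 0")
    case True
    then show ?thesis using scale[of t y] scale[of "1 - t" x] t x y by auto
  next
    case False
    then show ?thesis using convex_onD[OF powr_convex[OF assms], of t x y] t x y by simp
  qed
qed simp

lemma weighted_sum_powr_le:
  fixes a w :: "'i \<Rightarrow> real"
  assumes I: "finite I" and a: "\<And>i. i \<in> I \<Longrightarrow> 0 \<le> a i" and w: "\<And>i. i \<in> I \<Longrightarrow> 0 \<le> w i"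
    and q: "1 \<le> q"
  shows "(\<Sum>i\<in>I. a i * w i) powr q \<le> (\<Sum>i\<in>I. w i) powr (q - 1) * (\<Sum>i\<in>I. a i powr q * w i)"
proof (cases "(\<Sum>i\<in>I. w i) = 0")
  case True
  then have "\<forall>i\<in>I. w i = 0" using sum_nonneg_eq_0_iff[OF I] w by blast
  then show ?thesis by simp
next
  case False
  define W where "W = (\<Sum>i\<in>I. w i)"
  have W: "0 < W" using False sum_nonneg[of I w] w by (simp add: W_def)
  have "(\<Sum>i\<in>I. (w i / W) *\<^sub>R a i) powr q \<le> (\<Sum>i\<in>I. (w i / W) * a i powr q)"
    using W w a False
    by (intro convex_on_sum[OF I _ convex_on_powr_nonneg[OF q]])
       (auto simp: W_def sum_divide_distrib[symmetric])
  then have "(\<Sum>i\<in>I. a i * w i) powr q / W powr q \<le> (\<Sum>i\<in>I. a i powr q * w i) / W"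
    by (simp add: sum_divide_distrib[symmetric] mult.commute powr_divide sum_nonneg a w)
  then have "(\<Sum>i\<in>I. a i * w i) powr q \<le> (\<Sum>i\<in>I. a i powr q * w i) / W * W powr q"
    using W by (simp add: divide_le_eq)
  also have "\<dots> = W powr (q - 1) * (\<Sum>i\<in>I. a i powr q * w i)"
    using W by (simp add: powr_diff)
  finally show ?thesis unfolding W_def .
qed

lemma powr_add_le:
  fixes a b :: real
  assumes "1 \<le> q" "0 \<le> a" "0 \<le> b"
  shows "(a + b) powr q \<le> 2 powr (q - 1) * (a powr q + b powr q)"
  using weighted_sum_powr_le[of "{0::nat, 1}" "\<lambda>i. if i = 0 then a else b" "\<lambda>_. 1" q] assms by simp

lemma sum_power_abs_diff_le:
  fixes \<theta> :: real and m :: int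
  assumes "0 < \<theta>" "\<theta> < 1"
  shows "(\<Sum>j<N. \<theta> ^ nat \<bar>int j - m\<bar>) \<le> (1 + \<theta>) / (1 - \<theta>)"
proof -
  define A where "A = {j. j < N \<and> int j \<le> m}"
  define B where "B = {j. j < N \<and> m < int j}"
  have below: "(\<Sum>j\<in>A. \<theta> ^ nat \<bar>int j - m\<bar>) \<le> 1 / (1 - \<theta>)"
  proof -
    have "inj_on (\<lambda>j. nat (m - int j)) A" by (auto simp: A_def inj_on_def)
    moreover have "\<theta> ^ nat \<bar>int j - m\<bar> = \<theta> ^ nat (m - int j)" if "j \<in> A" for j
      using that by (simp add: A_def)
    ultimately have "(\<Sum>j\<in>A. \<theta> ^ nat \<bar>int j - m\<bar>) = (\<Sum>i\<in>(\<lambda>j. nat (m - int j)) ` A. \<theta> ^ i)"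
      by (simp add: sum.reindex cong: sum.cong)
    also have "\<dots> \<le> 1 / (1 - \<theta>)" using assms by (intro less_imp_le[OF geometric_sum_less]) (auto simp: A_def)
    finally show ?thesis .
  qed
  have above: "(\<Sum>j\<in>B. \<theta> ^ nat \<bar>int j - m\<bar>) \<le> \<theta> / (1 - \<theta>)"
  proof -
    have "inj_on (\<lambda>j. nat (int j - m - 1)) B" by (auto simp: B_def inj_on_def)
    moreover have "\<theta> ^ nat \<bar>int j - m\<bar> = \<theta> * \<theta> ^ nat (int j - m - 1)" if "j \<in> B" for j
      using that by (simp add: B_def power_Suc[symmetric] Suc_nat_eq_nat_zadd1)
    ultimately have "(\<Sum>j\<in>B. \<theta> ^ nat \<bar>int j - m\<bar>) = \<theta> * (\<Sum>i\<in>(\<lambda>j. nat (int j - m - 1)) ` B. \<theta> ^ i)"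
      by (simp add: sum.reindex sum_distrib_left cong: sum.cong)
    also have "\<dots> \<le> \<theta> * (1 / (1 - \<theta>))"
      using assms by (intro mult_left_mono less_imp_le[OF geometric_sum_less]) (auto simp: B_def)
    finally show ?thesis by simp
  qed
  have "{..<N} = A \<union> B" "A \<inter> B = {}" "finite A" "finite B" by (auto simp: A_def B_def)
  then have "(\<Sum>j<N. \<theta> ^ nat \<bar>int j - m\<bar>) = (\<Sum>j\<in>A. \<theta> ^ nat \<bar>int j - m\<bar>) + (\<Sum>j\<in>B. \<theta> ^ nat \<bar>int j - m\<bar>)"
    by (simp add: sum.union_disjoint)
  also have "\<dots> \<le> (1 + \<theta>) / (1 - \<theta>)" using below above by (simp add: add_divide_distrib)
  finally show ?thesis .
qed

lemma sum_powr_matrix_le: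
  fixes x :: "nat \<Rightarrow> real" and M :: "nat \<Rightarrow> nat \<Rightarrow> real"
  assumes q: "1 \<le> q" and x: "\<And>k. 0 \<le> x k" and M: "\<And>k j. 0 \<le> M k j" and \<epsilon>: "0 \<le> \<epsilon>"
    and rows: "\<And>k. k < N \<Longrightarrow> (\<Sum>j<N. M k j) \<le> \<epsilon>"
    and cols: "\<And>j. j < N \<Longrightarrow> (\<Sum>k<N. M k j) \<le> \<epsilon>"
  shows "(\<Sum>k<N. (\<Sum>j<N. M k j * x j) powr q) \<le> \<epsilon> powr q * (\<Sum>k<N. x k powr q)"
proof -
  have row_bound: "(\<Sum>j<N. M k j * x j) powr q \<le> \<epsilon> powr (q - 1) * (\<Sum>j<N. x j powr q * M k j)"
    if "k < N" for k
  proof -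
    have "(\<Sum>j<N. M k j * x j) powr q \<le> (\<Sum>j<N. M k j) powr (q - 1) * (\<Sum>j<N. x j powr q * M k j)"
      using x M q by (subst mult.commute) (intro weighted_sum_powr_le, auto)
    also have "\<dots> \<le> \<epsilon> powr (q - 1) * (\<Sum>j<N. x j powr q * M k j)"
      using rows[OF that] M q by (intro mult_right_mono powr_mono2 sum_nonneg mult_nonneg_nonneg) auto
    finally show ?thesis .
  qed
  have "(\<Sum>k<N. (\<Sum>j<N. M k j * x j) powr q) \<le> (\<Sum>k<N. \<epsilon> powr (q - 1) * (\<Sum>j<N. x j powr q * M k j))"
    using row_bound by (intro sum_mono) simp
  also have "\<dots> = \<epsilon> powr (q - 1) * (\<Sum>j<N. x j powr q * (\<Sum>k<N. M k j))"
    unfolding sum_distrib_left[symmetric] by (subst sum.swap) (simp add: sum_distrib_left)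
  also have "\<dots> \<le> \<epsilon> powr (q - 1) * (\<Sum>j<N. x j powr q * \<epsilon>)"
    using cols by (intro mult_left_mono sum_mono) auto
  also have "\<dots> = (\<epsilon> * \<epsilon> powr (q - 1)) * (\<Sum>k<N. x k powr q)"
    by (simp add: sum_distrib_left sum_distrib_right mult_ac)
  also have "\<epsilon> * \<epsilon> powr (q - 1) = \<epsilon> powr q" using powr_mult_base[OF \<epsilon>, of "q - 1"] by simp
  finally show ?thesis .
qed

text \<open>In \<open>\<ell>\<^sup>q\<close>, subtracting a perturbation of operator norm at most \<open>1/4\<close> loses at most a factor \<open>2\<close>.\<close>

lemma sum_powr_le_almost_diagonal:
  fixes x :: "nat \<Rightarrow> real" and M :: "nat \<Rightarrow> nat \<Rightarrow> real"
  assumes q: "1 \<le> q" and x: "\<And>k. 0 \<le> x k" and M: "\<And>k j. 0 \<le> M k j"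
    and rows: "\<And>k. k < N \<Longrightarrow> (\<Sum>j<N. M k j) \<le> 1/4"
    and cols: "\<And>j. j < N \<Longrightarrow> (\<Sum>k<N. M k j) \<le> 1/4"
  shows "(\<Sum>k<N. x k powr q) \<le> 2 powr q * (\<Sum>k<N. (max 0 (x k - (\<Sum>j<N. M k j * x j))) powr q)"
proof -
  define E where "E k = (\<Sum>j<N. M k j * x j)" for k
  define X where "X = (\<Sum>k<N. x k powr q)"
  define W where "W = (\<Sum>k<N. (max 0 (x k - E k)) powr q)"
  have E: "0 \<le> E k" for k using M x by (simp add: E_def sum_nonneg)
  have "x k powr q \<le> 2 powr (q - 1) * ((max 0 (x k - E k)) powr q + E k powr q)" for k
  proof -
    have "x k powr q \<le> (max 0 (x k - E k) + E k) powr q" using x q E by (intro powr_mono2) auto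
    also have "\<dots> \<le> 2 powr (q - 1) * ((max 0 (x k - E k)) powr q + E k powr q)"
      using q E by (intro powr_add_le) auto
    finally show ?thesis .
  qed
  then have "X \<le> (\<Sum>k<N. 2 powr (q - 1) * ((max 0 (x k - E k)) powr q + E k powr q))"
    unfolding X_def by (intro sum_mono)
  also have "\<dots> = 2 powr (q - 1) * W + 2 powr (q - 1) * (\<Sum>k<N. E k powr q)"
    by (simp add: W_def sum.distrib sum_distrib_left distrib_left)
  also have "2 powr (q - 1) * (\<Sum>k<N. E k powr q) \<le> 2 powr (q - 1) * ((1/4) powr q * X)"
    unfolding E_def X_def using sum_powr_matrix_le[OF q x M _ rows cols] by (intro mult_left_mono) auto
  also have "\<dots> \<le> 1/4 * X"
  proof -
    have "2 powr (q - 1) * (1/4) powr q = 1 / (2 * 2 powr q)"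
      using powr_mult[of 2 2 q] by (simp add: powr_diff powr_divide field_simps)
    moreover have "2 \<le> 2 powr q" using powr_mono[of 1 q 2] q by simp
    then have "1 / (2 * 2 powr q) \<le> 1 / 4" by (intro divide_left_mono) auto
    ultimately have "2 powr (q - 1) * (1/4) powr q \<le> 1/4" by linarith
    moreover have "0 \<le> X" by (simp add: X_def sum_nonneg)
    ultimately show ?thesis by (metis mult.assoc mult_right_mono)
  qed
  finally have "X \<le> (4/3) * 2 powr (q - 1) * W" by simp
  also have "\<dots> \<le> 2 powr q * W"
    using q by (simp add: W_def powr_diff sum_nonneg field_simps)
  finally show ?thesis by (simp add: X_def W_def E_def)
qed

lemma exp_diff_le:
  fixes u :: real
  assumes "0 \<le> u"
  shows "exp (- u) - exp (- (2 * u)) \<le> min u 1"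
proof -
  let ?e = "exp (- u)"
  have diff: "exp (- u) - exp (- (2 * u)) = ?e * (1 - ?e)" by (simp add: algebra_simps flip: exp_add)
  have "?e \<le> 1" "0 < ?e" using assms by auto
  then have "?e * (1 - ?e) \<le> 1 * (1 - ?e)" "?e * (1 - ?e) \<le> 1 * 1"
    by (intro mult_right_mono mult_mono; simp)+
  moreover have "1 - ?e \<le> u" using exp_ge_add_one_self[of "- u"] by simp
  ultimately show ?thesis unfolding diff by simp
qed

lemma exp_diff_ge:
  fixes u :: real
  shows "u * exp (- (2 * u)) \<le> exp (- u) - exp (- (2 * u))"
proof -
  have "exp (- (2 * u)) * (1 + u) \<le> exp (- (2 * u)) * exp u"
    by (intro mult_left_mono exp_ge_add_one_self) simp
  also have "exp (- (2 * u)) * exp u = exp (- u)" by (simp flip: exp_add)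
  finally show ?thesis by (simp add: algebra_simps)
qed

lemma exp_minus_two_ge: "1/9 \<le> exp (- 2 :: real)"
proof -
  have "exp (2::real) = exp 1 * exp 1" by (simp flip: exp_add)
  also have "\<dots> \<le> 3 * 3" using exp_le by (intro mult_mono) auto
  finally show ?thesis by (simp add: exp_minus field_simps)
qed

lemma integral_exp_doubling_interval:
  fixes a t :: real
  assumes a: "0 < a" and t: "0 < t"
  shows "integral\<^sup>L lborel (\<lambda>s. indicator {a .. 2 * a} s *\<^sub>R exp (- t * s))
    = (exp (- (a * t)) - exp (- (2 * a * t))) / t"
proof -
  have "integral\<^sup>L lborel (\<lambda>s. indicator {a .. 2 * a} s *\<^sub>R exp (- t * s))
      = - exp (- t * (2 * a)) / t - (- exp (- t * a) / t)"
  proof (rule integral_FTC_atLeastAtMost)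
    fix x
    have "((\<lambda>s. - exp (- t * s) / t) has_real_derivative exp (- t * x)) (at x)"
      using t by (auto intro!: derivative_eq_intros simp: field_simps)
    then show "((\<lambda>s. - exp (- t * s) / t) has_vector_derivative exp (- t * x)) (at x within {a..2 * a})"
      by (simp add: has_real_derivative_iff_has_vector_derivative has_vector_derivative_at_within)
  qed (use a in \<open>auto intro!: continuous_intros\<close>)
  then show ?thesis by (simp add: diff_divide_distrib mult_ac)
qed

lemma powr_comparable_of_common_bounds:
  fixes I J :: ennreal
  assumes q: "0 < q" and S: "0 \<le> S" and pos: "0 < A" "0 < B" "0 < A'" "0 < B'"
    and I: "ennreal (A * S) \<le> I" "I \<le> ennreal (B * S)"
    and J: "ennreal (A' * S) \<le> J" "J \<le> ennreal (B' * S)"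
  shows "(A' / B) powr (1/q) * enn2real I powr (1/q) \<le> enn2real J powr (1/q)"
    and "enn2real J powr (1/q) \<le> (B' / A) powr (1/q) * enn2real I powr (1/q)"
proof -
  have real_bounds: "a \<le> enn2real K \<and> enn2real K \<le> b"
    if "ennreal a \<le> K" "K \<le> ennreal b" "0 \<le> a" "0 \<le> b" for K :: ennreal and a b
  proof -
    have "K < \<infinity>" using that(2) by (simp add: le_less_trans)
    then show ?thesis using that enn2real_mono[OF that(1)] enn2real_mono[OF that(2)] by simp
  qed
  define x y where "x = enn2real I" and "y = enn2real J"
  have x: "A * S \<le> x" "x \<le> B * S" and y: "A' * S \<le> y" "y \<le> B' * S"
    using real_bounds[OF I] real_bounds[OF J] pos S by (auto simp: x_def y_def)
  have x0: "0 \<le> x" using x pos S by (meson mult_nonneg_nonneg order_trans less_imp_le)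
  have "A' / B * x \<le> A' / B * (B * S)" using x pos by (intro mult_left_mono) auto
  then have "A' / B * x \<le> y" using y pos by simp
  then have "(A' / B * x) powr (1/q) \<le> y powr (1/q)" using x0 pos q by (intro powr_mono2) auto
  moreover have "(A' / B * x) powr (1/q) = (A' / B) powr (1/q) * x powr (1/q)"
    using powr_mult[of "A' / B" x "1/q"] pos x0 by simp
  ultimately show "(A' / B) powr (1/q) * enn2real I powr (1/q) \<le> enn2real J powr (1/q)"
    by (simp add: x_def y_def)
  have "B' / A * (A * S) \<le> B' / A * x" using x pos by (intro mult_left_mono) auto
  then have "y \<le> B' / A * x" using y pos by simp
  moreover have "0 \<le> y" using y pos S by (meson mult_nonneg_nonneg order_trans less_imp_le)
  ultimately have "y powr (1/q) \<le> (B' / A * x) powr (1/q)" using q by (intro powr_mono2) auto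
  moreover have "(B' / A * x) powr (1/q) = (B' / A) powr (1/q) * x powr (1/q)"
    using powr_mult[of "B' / A" x "1/q"] pos x0 by simp
  ultimately show "enn2real J powr (1/q) \<le> (B' / A) powr (1/q) * enn2real I powr (1/q)"
    by (simp add: x_def y_def)
qed

section \<open>Rearrangement bounds for the Lorentz functional\<close>

lemma space_pos_measure [simp]: "space pos_measure = {0<..}"
  by (simp add: pos_measure_def space_restrict_space)

lemma rearr_le_antimono_majorant:
  assumes antimono: "\<And>x y. 0 < x \<Longrightarrow> x \<le> y \<Longrightarrow> H y \<le> H x"
    and majorant: "\<And>x. 0 < x \<Longrightarrow> \<bar>g x\<bar> \<le> H x" and t: "0 < t"
  shows "rearr g t \<le> ennreal (H t)"
proof -
  have Ht: "0 \<le> H t" using majorant[OF t] by linarith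
  have "{x. 0 < x \<and> ennreal (H t) < ennreal \<bar>g x\<bar>} \<subseteq> {0<..<t}"
  proof
    fix x assume "x \<in> {x. 0 < x \<and> ennreal (H t) < ennreal \<bar>g x\<bar>}"
    then have x: "0 < x" and "H t < \<bar>g x\<bar>" using Ht by (auto simp: ennreal_less_iff)
    then have "x < t" using antimono[OF t] majorant[OF x] by (meson leI not_less order_trans)
    then show "x \<in> {0<..<t}" using x by simp
  qed
  then have "distrib_fun g (ennreal (H t)) \<le> emeasure lborel {0<..<t}"
    unfolding distrib_fun_def by (rule emeasure_mono) auto
  also have "\<dots> = ennreal t" using t by simp
  finally show ?thesis unfolding rearr_def by (auto intro: Inf_lower)
qed

lemma rearr_ge_level_set:
  assumes g: "g \<in> borel_measurable pos_measure"
    and A: "A \<subseteq> {0<..}" and v: "\<And>x. x \<in> A \<Longrightarrow> v \<le> \<bar>g x\<bar>"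
    and t: "ennreal t < emeasure lborel A"
  shows "ennreal v \<le> rearr g t"
  unfolding rearr_def
proof (rule Inf_greatest, rule ccontr)
  fix s assume "s \<in> {s. distrib_fun g s \<le> ennreal t}" and "\<not> ennreal v \<le> s"
  then have s: "distrib_fun g s \<le> ennreal t" and sv: "s < ennreal v" by auto
  have "{x \<in> space pos_measure. s < ennreal \<bar>g x\<bar>} \<in> sets pos_measure" using g by measurable
  then have meas: "{x. 0 < x \<and> s < ennreal \<bar>g x\<bar>} \<in> sets lborel"
    by (simp add: pos_measure_def sets_restrict_space_iff)
  have "A \<subseteq> {x. 0 < x \<and> s < ennreal \<bar>g x\<bar>}"
    using A v sv by (force intro: less_le_trans ennreal_leI)
  then have "emeasure lborel A \<le> distrib_fun g s"
    unfolding distrib_fun_def by (rule emeasure_mono[OF _ meas])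
  with s t show False by (meson leD order_trans)
qed

lemma lorentz_integral_le_of_rearr_le:
  assumes rearr: "\<And>t. 0 < t \<Longrightarrow> rearr g t \<le> ennreal (H t)"
    and H: "\<And>t. 0 < t \<Longrightarrow> 0 \<le> H t" and q: "0 < q"
  shows "lorentz_integral r q g
    \<le> (\<integral>\<^sup>+ t. indicator {0<..} t * ennreal ((t powr (1/r) * H t) powr q / t) \<partial>lborel)"
  unfolding lorentz_integral_def
proof (rule nn_integral_mono)
  fix t :: real
  show "indicator {0<..} t * (if rearr g t = \<infinity> then \<infinity>
          else ennreal ((t powr (1/r) * enn2real (rearr g t)) powr q / t))
      \<le> indicator {0<..} t * ennreal ((t powr (1/r) * H t) powr q / t)"
  proof (cases "0 < t")
    case True
    have finite: "rearr g t \<noteq> \<infinity>" using rearr[OF True] by (auto simp: top_unique)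
    have "enn2real (rearr g t) \<le> H t"
      using enn2real_mono[OF rearr[OF True]] H[OF True] by simp
    then have "(t powr (1/r) * enn2real (rearr g t)) powr q \<le> (t powr (1/r) * H t) powr q"
      using q by (intro powr_mono2 mult_left_mono) auto
    then show ?thesis using finite True by (auto intro!: ennreal_leI divide_right_mono)
  qed simp
qed

lemma sum_indicator_disjoint_le:
  fixes F :: "nat \<Rightarrow> ennreal"
  assumes disjoint: "\<And>j k. j < N \<Longrightarrow> k < N \<Longrightarrow> j \<noteq> k \<Longrightarrow> J j \<inter> J k = {}"
    and le: "\<And>k. k < N \<Longrightarrow> t \<in> J k \<Longrightarrow> F k \<le> B"
  shows "(\<Sum>k<N. indicator (J k) t * F k) \<le> B"
proof (cases "\<exists>k<N. t \<in> J k")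
  case True
  then obtain k where k: "k < N" "t \<in> J k" by auto
  have "t \<notin> J i" if "i < N" "i \<noteq> k" for i
    using disjoint[OF that(1) k(1) that(2)] k(2) by blast
  then have "(\<Sum>i<N. indicator (J i) t * F i) = (\<Sum>i\<in>{k}. indicator (J i) t * F i)"
    using k by (intro sum.mono_neutral_right) auto
  then show ?thesis using k le by simp
qed (simp add: sum.neutral)

lemma nn_integral_powr_interval:
  assumes "0 < a" "a \<le> b" "0 < \<alpha>"
  shows "(\<integral>\<^sup>+ t. indicator {a..b} t * ennreal (t powr (\<alpha> - 1)) \<partial>lborel)
    = ennreal ((b powr \<alpha> - a powr \<alpha>) / \<alpha>)"
proof -
  have "((\<lambda>t. t powr (\<alpha> - 1)) has_integral (b powr \<alpha> / \<alpha> - a powr \<alpha> / \<alpha>)) {a..b}"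
  proof (rule fundamental_theorem_of_calculus[OF \<open>a \<le> b\<close>])
    fix x assume "x \<in> {a..b}"
    then have "0 < x" using assms by auto
    then show "((\<lambda>t. t powr \<alpha> / \<alpha>) has_vector_derivative x powr (\<alpha> - 1)) (at x within {a..b})"
      using \<open>0 < \<alpha>\<close>
      by (auto intro!: derivative_eq_intros simp: has_real_derivative_iff_has_vector_derivative[symmetric]
          has_field_derivative_at_within)
  qed
  then have "(\<integral>\<^sup>+ t. ennreal (t powr (\<alpha> - 1)) * indicator {a..b} t \<partial>lborel) = ennreal ((b powr \<alpha> - a powr \<alpha>) / \<alpha>)"
    by (subst nn_integral_has_integral_lebesgue') (auto simp: diff_divide_distrib)
  then show ?thesis by (simp add: mult.commute)
qed

lemma lorentz_block_integral:
  assumes b: "0 < b" and R: "2 < R" and v: "0 \<le> v" and r: "0 < r" and q: "0 < q"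
  shows "(\<integral>\<^sup>+ t. indicator {b/R .. b/2} t * ennreal ((t powr (1/r) * v) powr q / t) \<partial>lborel)
    = ennreal ((v * b powr (1/r)) powr q * ((1 / 2 powr (q/r) - 1 / R powr (q/r)) / (q/r)))"
proof -
  have "b / R \<le> b / 2" and "0 < b / R" using b R by (auto simp: field_simps)
  have integrand: "indicator {b/R .. b/2} t * ennreal ((t powr (1/r) * v) powr q / t)
      = ennreal (v powr q) * (indicator {b/R .. b/2} t * ennreal (t powr (q/r - 1)))" for t
  proof (cases "t \<in> {b/R .. b/2}")
    case True
    then have "0 < t" using \<open>0 < b / R\<close> by auto
    then have "(t powr (1/r) * v) powr q / t = v powr q * t powr (q/r - 1)"
      using v by (simp add: powr_mult powr_powr powr_diff)
    then show ?thesis using True by (simp add: ennreal_mult' del: atLeastAtMost_iff)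
  qed simp
  have "(\<integral>\<^sup>+ t. indicator {b/R .. b/2} t * ennreal ((t powr (1/r) * v) powr q / t) \<partial>lborel)
      = ennreal (v powr q) * ennreal (((b/2) powr (q/r) - (b/R) powr (q/r)) / (q/r))"
    unfolding integrand using \<open>b / R \<le> b / 2\<close> \<open>0 < b / R\<close> r q
    by (simp add: nn_integral_cmult nn_integral_powr_interval)
  also have "\<dots> = ennreal (v powr q * (((b/2) powr (q/r) - (b/R) powr (q/r)) / (q/r)))"
    using \<open>b / R \<le> b / 2\<close> \<open>0 < b / R\<close> r q by (intro ennreal_mult'[symmetric] divide_nonneg_pos) (auto intro: powr_mono2)
  also have "v powr q * (((b/2) powr (q/r) - (b/R) powr (q/r)) / (q/r))
      = (v * b powr (1/r)) powr q * ((1 / 2 powr (q/r) - 1 / R powr (q/r)) / (q/r))"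
    using b R v by (simp add: powr_mult powr_powr powr_divide field_simps)
  finally show ?thesis .
qed

lemma lorentz_integral_ge_disjoint_sum:
  fixes v :: "nat \<Rightarrow> real" and J :: "nat \<Rightarrow> real set"
  assumes disjoint: "\<And>j k. j < N \<Longrightarrow> k < N \<Longrightarrow> j \<noteq> k \<Longrightarrow> J j \<inter> J k = {}"
    and J: "\<And>k. k < N \<Longrightarrow> J k \<subseteq> {0<..}" "\<And>k. J k \<in> sets lborel"
    and v: "\<And>k. k < N \<Longrightarrow> 0 \<le> v k" and rearr: "\<And>k t. k < N \<Longrightarrow> t \<in> J k \<Longrightarrow> ennreal (v k) \<le> rearr g t"
    and q: "0 < q"
  shows "(\<Sum>k<N. \<integral>\<^sup>+ t. indicator (J k) t * ennreal ((t powr (1/r) * v k) powr q / t) \<partial>lborel)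
    \<le> lorentz_integral r q g"
proof -
  define F where "F k t = ennreal ((t powr (1/r) * v k) powr q / t)" for k t
  have "(\<Sum>k<N. \<integral>\<^sup>+ t. indicator (J k) t * F k t \<partial>lborel) = (\<integral>\<^sup>+ t. (\<Sum>k<N. indicator (J k) t * F k t) \<partial>lborel)"
    by (rule nn_integral_sum[symmetric]) (use J(2) in \<open>auto simp: F_def\<close>)
  also have "\<dots> \<le> lorentz_integral r q g"
    unfolding lorentz_integral_def
  proof (intro nn_integral_mono sum_indicator_disjoint_le[OF disjoint])
    fix k t assume k: "k < N" and t: "t \<in> J k"
    have t0: "0 < t" using J(1)[OF k] t by auto
    have "rearr g t \<noteq> \<infinity> \<Longrightarrow> v k \<le> enn2real (rearr g t)"
      using enn2real_mono[OF rearr[OF k t]] v[OF k] by (simp add: top.not_eq_extremum)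
    then have "rearr g t \<noteq> \<infinity> \<Longrightarrow> F k t \<le> ennreal ((t powr (1/r) * enn2real (rearr g t)) powr q / t)"
      unfolding F_def using t0 v[OF k] q by (auto intro!: ennreal_leI divide_right_mono powr_mono2 mult_left_mono)
    then show "F k t \<le> indicator {0<..} t * (if rearr g t = \<infinity> then \<infinity>
        else ennreal ((t powr (1/r) * enn2real (rearr g t)) powr q / t))"
      using t0 by auto
  qed
  finally show ?thesis unfolding F_def .
qed

text \<open>The rearrangement is at least \<open>v k\<close> on \<open>[b k / R, b k / 2]\<close>, and separation of the
  scales makes these intervals disjoint.\<close>

lemma lorentz_integral_ge_separated_blocks:
  fixes b v :: "nat \<Rightarrow> real" and A :: "nat \<Rightarrow> real set"
  assumes g: "g \<in> borel_measurable pos_measure" and r: "0 < r" and q: "0 < q" and R: "2 < R"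
    and b: "\<And>k. k < N \<Longrightarrow> 0 < b k"
    and separated: "\<And>j k. j < N \<Longrightarrow> k < N \<Longrightarrow> j \<noteq> k \<Longrightarrow> R * b j \<le> b k \<or> R * b k \<le> b j"
    and A: "\<And>k. k < N \<Longrightarrow> A k \<subseteq> {0<..}" "\<And>k. k < N \<Longrightarrow> ennreal (b k) \<le> emeasure lborel (A k)"
    and v: "\<And>k. k < N \<Longrightarrow> 0 \<le> v k" "\<And>k x. k < N \<Longrightarrow> x \<in> A k \<Longrightarrow> v k \<le> \<bar>g x\<bar>"
  shows "ennreal ((1 / 2 powr (q/r) - 1 / R powr (q/r)) / (q/r) * (\<Sum>k<N. (v k * b k powr (1/r)) powr q))
    \<le> lorentz_integral r q g"
proof -
  define \<kappa> where "\<kappa> = (1 / 2 powr (q/r) - 1 / R powr (q/r)) / (q/r)"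
  define J where "J k = {b k / R .. b k / 2}" for k
  have "2 powr (q/r) \<le> R powr (q/r)" using R r q by (intro powr_mono2) auto
  then have "1 / R powr (q/r) \<le> 1 / 2 powr (q/r)" by (simp add: frac_le)
  then have \<kappa>: "0 \<le> \<kappa>" using r q by (simp add: \<kappa>_def)
  have disjoint: "J j \<inter> J k = {}" if "j < N" "k < N" "j \<noteq> k" for j k
  proof -
    have gap: "b j / 2 < b k / R \<or> b k / 2 < b j / R"
      using separated[OF that] b[OF that(1)] b[OF that(2)] R by (auto simp: field_simps)
    show ?thesis
    proof (rule equals0I)
      fix x assume "x \<in> J j \<inter> J k"
      then have "b j / R \<le> x" "x \<le> b j / 2" "b k / R \<le> x" "x \<le> b k / 2" by (auto simp: J_def)
      with gap show False by linarith
    qed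
  qed
  have rearr_ge: "ennreal (v k) \<le> rearr g t" if "k < N" "t \<in> J k" for k t
  proof (rule rearr_ge_level_set[OF g A(1)[OF that(1)] v(2)[OF that(1)]])
    have "t < b k" using that b[of k] by (auto simp: J_def)
    then have "ennreal t < ennreal (b k)" using b[OF that(1)] by (simp add: ennreal_lessI)
    then show "ennreal t < emeasure lborel (A k)" using A(2)[OF that(1)] by (rule less_le_trans)
  qed
  have "ennreal (\<kappa> * (\<Sum>k<N. (v k * b k powr (1/r)) powr q)) = (\<Sum>k<N. ennreal ((v k * b k powr (1/r)) powr q * \<kappa>))"
    using \<kappa> by (simp add: sum_distrib_left mult.commute)
  also have "\<dots> = (\<Sum>k<N. \<integral>\<^sup>+ t. indicator (J k) t * ennreal ((t powr (1/r) * v k) powr q / t) \<partial>lborel)"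
    unfolding J_def \<kappa>_def using b v(1) R r q by (intro sum.cong refl lorentz_block_integral[symmetric]) auto
  also have "\<dots> \<le> lorentz_integral r q g"
    using disjoint rearr_ge v(1) q b R
    by (intro lorentz_integral_ge_disjoint_sum) (auto simp: J_def intro: less_le_trans[rotated])
  finally show ?thesis unfolding \<kappa>_def .
qed

section \<open>Dilation sums\<close>

lemma nn_integral_dilation_invariant:
  fixes \<gamma> :: "real \<Rightarrow> real"
  assumes [measurable]: "\<gamma> \<in> borel_measurable borel" and \<mu>: "0 < \<mu>"
  shows "(\<integral>\<^sup>+ t. indicator {0<..} t * ennreal (\<gamma> (\<mu> * t) / t) \<partial>lborel)
    = (\<integral>\<^sup>+ x. indicator {0<..} x * ennreal (\<gamma> x / x) \<partial>lborel)"
proof -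
  let ?f = "\<lambda>x::real. indicator {0<..} x * ennreal (\<gamma> x / x)"
  have "(\<integral>\<^sup>+ x. ?f x \<partial>lborel) = ennreal \<mu> * (\<integral>\<^sup>+ x. ?f (0 + \<mu> * x) \<partial>lborel)"
    using nn_integral_real_affine[of ?f \<mu> 0] \<mu> by simp
  also have "\<dots> = (\<integral>\<^sup>+ x. ennreal \<mu> * ?f (\<mu> * x) \<partial>lborel)"
    by (simp add: nn_integral_cmult)
  also have "\<dots> = (\<integral>\<^sup>+ t. indicator {0<..} t * ennreal (\<gamma> (\<mu> * t) / t) \<partial>lborel)"
  proof (rule nn_integral_cong)
    fix x :: real
    have "\<mu> * (\<gamma> (\<mu> * x) / (\<mu> * x)) = \<gamma> (\<mu> * x) / x" using \<mu> by simp
    then show "ennreal \<mu> * ?f (\<mu> * x) = indicator {0<..} x * ennreal (\<gamma> (\<mu> * x) / x)"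
      using \<mu> by (auto simp: indicator_def zero_less_mult_iff ennreal_mult'[symmetric])
  qed
  finally show ?thesis by simp
qed

text \<open>\<open>bump r (\<mu> t)\<close> is \<open>t powr (1/r)\<close> times the nonincreasing profile \<open>\<mu> powr (1/r) * min 1 (1/(\<mu> t))\<close>
  (see \<open>bump_eq\<close>), i.e. the integrand of the Lorentz functional for one dilated profile.\<close>

definition bump :: "real \<Rightarrow> real \<Rightarrow> real" where
  "bump r y = min (y powr (1/r)) (y powr (1/r - 1))"

lemma bump_nonneg: "0 \<le> bump r y"
  by (simp add: bump_def)

lemma bump_measurable [measurable]: "bump r \<in> borel_measurable borel"
  unfolding bump_def[abs_def] by measurable

lemma bump_eq: "0 < y \<Longrightarrow> bump r y = y powr (1/r) * min 1 (1/y)"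
  by (simp add: bump_def powr_diff min_mult_distrib_left divide_inverse)

lemma bump_inverse:
  assumes "1 < r" "0 < y"
  shows "bump r (1/y) = bump (r / (r - 1)) y"
proof -
  have conj: "1 / (r / (r - 1)) = 1 - 1/r" using assms by (simp add: field_simps)
  have inv: "(1/y) powr a = y powr (- a)" for a using assms by (simp add: powr_divide powr_minus_divide)
  have "- (1/r) = 1 - 1/r - 1" "- (1/r - 1) = 1 - 1/r" by simp_all
  then show ?thesis unfolding bump_def conj inv by (simp only: min.commute)
qed

lemma bump_mult_le:
  assumes "1 \<le> s" "0 < y"
  shows "bump r (s * y) \<le> s powr (1/r) * bump r y"
proof -
  have "y \<le> s * y" using assms by simp
  then have "min 1 (1 / (s * y)) \<le> min 1 (1 / y)"
    using assms by (intro min.mono frac_le) auto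
  then have "s powr (1/r) * (y powr (1/r) * min 1 (1 / (s * y))) \<le> s powr (1/r) * (y powr (1/r) * min 1 (1 / y))"
    by (intro mult_left_mono) auto
  then show ?thesis using assms by (simp add: bump_eq powr_mult mult.assoc)
qed

lemma bump_power_le:
  fixes d :: int
  assumes R: "1 < R" and \<rho>: "0 < \<rho>" "\<rho> \<le> R powr (1/r)" "\<rho> \<le> R powr (1 - 1/r)"
  shows "bump r (R powr d) \<le> (1/\<rho>) ^ nat \<bar>d\<bar>"
proof -
  have geometric: "\<rho> powr (- real n) = (1/\<rho>) ^ n" for n
    using \<rho> by (simp add: powr_minus powr_realpow power_one_over inverse_eq_divide)
  show ?thesis
  proof (cases "0 \<le> d")
    case True
    have "bump r (R powr d) \<le> (R powr d) powr (1/r - 1)" by (simp add: bump_def)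
    also have "\<dots> = (R powr (1 - 1/r)) powr (- d)" by (simp add: powr_powr algebra_simps)
    also have "\<dots> \<le> \<rho> powr (- d)" using True \<rho> by (intro powr_mono2') auto
    finally show ?thesis using True geometric[of "nat d"] by simp
  next
    case False
    have "bump r (R powr d) \<le> (R powr d) powr (1/r)" by (simp add: bump_def)
    also have "\<dots> = (R powr (1/r)) powr d" by (simp add: powr_powr mult.commute)
    also have "\<dots> \<le> \<rho> powr d" using False \<rho> by (intro powr_mono2') auto
    finally show ?thesis using False geometric[of "nat (- d)"] by simp
  qed
qed

lemma sum_bump_geometric_le:
  assumes r: "0 < r" and R: "1 < R" and \<rho>: "2 \<le> \<rho>" "\<rho> \<le> R powr (1/r)" "\<rho> \<le> R powr (1 - 1/r)"
    and t: "0 < t"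
  shows "(\<Sum>j<N. bump r (R ^ j * t)) \<le> 3 * R powr (1/r)"
proof -
  define m where "m = \<lfloor>log R t\<rfloor>"
  define s where "s = t / R powr m"
  have "R powr m \<le> R powr (log R t)" using R by (intro powr_mono) (auto simp: m_def)
  moreover have "R powr (log R t) < R powr (m + 1)" using R by (intro powr_less_mono) (auto simp: m_def)
  ultimately have s: "1 \<le> s" "s \<le> R" using R t by (simp_all add: s_def field_simps powr_add)
  have "bump r (R ^ j * t) \<le> R powr (1/r) * (1/\<rho>) ^ nat \<bar>int j - (- m)\<bar>" for j
  proof -
    have "R ^ j * t = s * R powr (of_int (int j + m))"
      using R by (simp add: s_def powr_add powr_realpow[symmetric])
    then have "bump r (R ^ j * t) \<le> s powr (1/r) * bump r (R powr (of_int (int j + m)))"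
      using s R by (simp add: bump_mult_le)
    also have "\<dots> \<le> R powr (1/r) * (1/\<rho>) ^ nat \<bar>int j + m\<bar>"
      using s r R \<rho> by (intro mult_mono powr_mono2 bump_power_le bump_nonneg) auto
    finally show ?thesis by simp
  qed
  then have "(\<Sum>j<N. bump r (R ^ j * t)) \<le> R powr (1/r) * (\<Sum>j<N. (1/\<rho>) ^ nat \<bar>int j - (- m)\<bar>)"
    by (simp add: sum_distrib_left sum_mono)
  also have "\<dots> \<le> R powr (1/r) * ((1 + 1/\<rho>) / (1 - 1/\<rho>))"
    using \<rho> by (intro mult_left_mono sum_power_abs_diff_le) auto
  also have "\<dots> \<le> R powr (1/r) * 3"
    using \<rho> by (intro mult_left_mono) (auto simp: field_simps)
  finally show ?thesis by simp
qed

lemma nn_integral_bump_le: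
  assumes r: "1 < r"
  shows "(\<integral>\<^sup>+ y. indicator {0<..} y * ennreal (bump r y / y) \<partial>lborel) \<le> ennreal (r + r / (r - 1))"
proof -
  have "indicator {0<..} y * ennreal (bump r y / y)
      \<le> ennreal (y powr (1/r - 1)) * indicator {0..1} y + ennreal (y powr (1/r - 2)) * indicator {1..} y"
    for y :: real
  proof (cases "0 < y")
    case True
    have "bump r y / y \<le> (if y \<le> 1 then y powr (1/r) else y powr (1/r - 1)) / y"
      using True by (intro divide_right_mono) (auto simp: bump_def)
    also have "\<dots> = (if y \<le> 1 then y powr (1/r - 1) else y powr (1/r - 2))"
      using True by (simp add: powr_diff power2_eq_square)
    finally have "ennreal (bump r y / y) \<le> ennreal (if y \<le> 1 then y powr (1/r - 1) else y powr (1/r - 2))"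
      by (rule ennreal_leI)
    also have "\<dots> \<le> ennreal (y powr (1/r - 1)) * indicator {0..1} y + ennreal (y powr (1/r - 2)) * indicator {1..} y"
      using True by (cases "y \<le> 1") (auto simp: indicator_def intro: add_increasing2)
    finally show ?thesis using True by simp
  qed simp
  then have "(\<integral>\<^sup>+ y. indicator {0<..} y * ennreal (bump r y / y) \<partial>lborel)
      \<le> (\<integral>\<^sup>+ y. ennreal (y powr (1/r - 1)) * indicator {0..1} y \<partial>lborel)
        + (\<integral>\<^sup>+ y. ennreal (y powr (1/r - 2)) * indicator {1..} y \<partial>lborel)"
    by (subst nn_integral_add[symmetric]) (auto intro: nn_integral_mono)
  also have "(\<integral>\<^sup>+ y. ennreal (y powr (1/r - 1)) * indicator {0..1} y \<partial>lborel) = ennreal r"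
    using has_integral_powr_from_0[of "1/r - 1" 1] r by (subst nn_integral_has_integral_lebesgue') auto
  also have "(\<integral>\<^sup>+ y. ennreal (y powr (1/r - 2)) * indicator {1..} y \<partial>lborel) = ennreal (r / (r - 1))"
  proof -
    have "- (1 powr (1/r - 2 + 1)) / (1/r - 2 + 1) = r / (r - 1)" using r by (simp add: field_simps)
    then show ?thesis using has_integral_powr_to_inf[of "1/r - 2" 1] r
      by (subst nn_integral_has_integral_lebesgue') auto
  qed
  finally show ?thesis using r by simp
qed

lemma powr_weighted_bump_sum_le:
  fixes w \<mu> :: "nat \<Rightarrow> real"
  assumes q: "1 \<le> q" and w: "\<And>j. 0 \<le> w j" and G: "(\<Sum>j<N. bump r (\<mu> j * t)) \<le> G" and t: "0 < t"
  shows "(\<Sum>j<N. w j * bump r (\<mu> j * t)) powr q / t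
    \<le> (\<Sum>j<N. G powr (q - 1) * w j powr q * (bump r (\<mu> j * t) / t))"
proof -
  have "(\<Sum>j<N. w j * bump r (\<mu> j * t)) powr q
      \<le> (\<Sum>j<N. bump r (\<mu> j * t)) powr (q - 1) * (\<Sum>j<N. w j powr q * bump r (\<mu> j * t))"
    using w q by (intro weighted_sum_powr_le) (auto simp: bump_nonneg)
  also have "\<dots> \<le> G powr (q - 1) * (\<Sum>j<N. w j powr q * bump r (\<mu> j * t))"
    using G q by (intro mult_right_mono powr_mono2 sum_nonneg) (auto simp: bump_nonneg)
  finally have "(\<Sum>j<N. w j * bump r (\<mu> j * t)) powr q / t
      \<le> G powr (q - 1) * (\<Sum>j<N. w j powr q * bump r (\<mu> j * t)) / t"
    using t by (simp add: divide_right_mono)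
  also have "\<dots> = (\<Sum>j<N. G powr (q - 1) * w j powr q * (bump r (\<mu> j * t) / t))"
    by (simp add: sum_divide_distrib sum_distrib_left mult_ac)
  finally show ?thesis .
qed

lemma nn_integral_bump_sum_powr_le:
  fixes w \<mu> :: "nat \<Rightarrow> real"
  assumes r: "1 < r" and q: "1 \<le> q" and \<mu>: "\<And>j. 0 < \<mu> j" and w: "\<And>j. 0 \<le> w j"
    and G: "\<And>t. 0 < t \<Longrightarrow> (\<Sum>j<N. bump r (\<mu> j * t)) \<le> G"
  shows "(\<integral>\<^sup>+ t. indicator {0<..} t * ennreal ((\<Sum>j<N. w j * bump r (\<mu> j * t)) powr q / t) \<partial>lborel)
    \<le> ennreal (G powr (q - 1) * (r + r / (r - 1)) * (\<Sum>j<N. w j powr q))"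
proof -
  define a where "a j = G powr (q - 1) * w j powr q" for j
  have a: "0 \<le> a j" for j by (simp add: a_def)
  have pointwise: "(\<Sum>j<N. w j * bump r (\<mu> j * t)) powr q / t \<le> (\<Sum>j<N. a j * (bump r (\<mu> j * t) / t))"
    if t: "0 < t" for t
    unfolding a_def using powr_weighted_bump_sum_le[OF q w G[OF t] t] .
  have "(\<integral>\<^sup>+ t. indicator {0<..} t * ennreal ((\<Sum>j<N. w j * bump r (\<mu> j * t)) powr q / t) \<partial>lborel)
      \<le> (\<integral>\<^sup>+ t. (\<Sum>j<N. ennreal (a j) * (indicator {0<..} t * ennreal (bump r (\<mu> j * t) / t))) \<partial>lborel)"
  proof (rule nn_integral_mono)
    fix t :: real
    show "indicator {0<..} t * ennreal ((\<Sum>j<N. w j * bump r (\<mu> j * t)) powr q / t)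
        \<le> (\<Sum>j<N. ennreal (a j) * (indicator {0<..} t * ennreal (bump r (\<mu> j * t) / t)))"
    proof (cases "0 < t")
      case True
      have "ennreal ((\<Sum>j<N. w j * bump r (\<mu> j * t)) powr q / t) \<le> ennreal (\<Sum>j<N. a j * (bump r (\<mu> j * t) / t))"
        using pointwise[OF True] by (rule ennreal_leI)
      also have "\<dots> = (\<Sum>j<N. ennreal (a j) * ennreal (bump r (\<mu> j * t) / t))"
        using True a by (subst sum_ennreal[symmetric]) (auto simp: bump_nonneg ennreal_mult'[symmetric])
      finally show ?thesis using True by simp
    qed simp
  qed
  also have "\<dots> = (\<Sum>j<N. ennreal (a j) * (\<integral>\<^sup>+ y. indicator {0<..} y * ennreal (bump r y / y) \<partial>lborel))"
    using \<mu> by (simp add: nn_integral_sum nn_integral_cmult nn_integral_dilation_invariant)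
  also have "\<dots> \<le> (\<Sum>j<N. ennreal (a j) * ennreal (r + r / (r - 1)))"
    by (intro sum_mono mult_left_mono nn_integral_bump_le[OF r]) auto
  also have "\<dots> = (\<Sum>j<N. ennreal (a j * (r + r / (r - 1))))"
    using a by (intro sum.cong refl ennreal_mult'[symmetric]) auto
  also have "\<dots> = ennreal (\<Sum>j<N. a j * (r + r / (r - 1)))"
    using a r by (intro sum_ennreal) auto
  also have "(\<Sum>j<N. a j * (r + r / (r - 1))) = G powr (q - 1) * (r + r / (r - 1)) * (\<Sum>j<N. w j powr q)"
    by (simp add: a_def sum_distrib_left mult_ac)
  finally show ?thesis .
qed

lemma lorentz_integral_le_bump_sum:
  fixes w \<mu> :: "nat \<Rightarrow> real"
  assumes r: "1 < r" and q: "1 \<le> q" and \<mu>: "\<And>j. 0 < \<mu> j" and w: "\<And>j. 0 \<le> w j"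
    and g: "\<And>x. 0 < x \<Longrightarrow> \<bar>g x\<bar> \<le> (\<Sum>j<N. w j * \<mu> j powr (1/r) * min 1 (1 / (\<mu> j * x)))"
    and G: "\<And>x. 0 < x \<Longrightarrow> (\<Sum>j<N. bump r (\<mu> j * x)) \<le> G"
  shows "lorentz_integral r q g \<le> ennreal (G powr (q - 1) * (r + r / (r - 1)) * (\<Sum>j<N. w j powr q))"
proof -
  define H where "H x = (\<Sum>j<N. w j * \<mu> j powr (1/r) * min 1 (1 / (\<mu> j * x)))" for x
  have "rearr g t \<le> ennreal (H t)" if "0 < t" for t
  proof (rule rearr_le_antimono_majorant[OF _ g[folded H_def] that])
    fix x y :: real assume "0 < x" "x \<le> y"
    then show "H y \<le> H x"
      using \<mu> w unfolding H_def by (intro sum_mono mult_left_mono min.mono frac_le) (auto intro: less_imp_le)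
  qed
  then have "lorentz_integral r q g
      \<le> (\<integral>\<^sup>+ t. indicator {0<..} t * ennreal ((t powr (1/r) * H t) powr q / t) \<partial>lborel)"
  proof (rule lorentz_integral_le_of_rearr_le)
    show "0 \<le> H x" if "0 < x" for x
      using that \<mu>[THEN less_imp_le] w by (auto simp: H_def intro!: sum_nonneg mult_nonneg_nonneg)
  qed (use q in auto)
  also have "\<dots> = (\<integral>\<^sup>+ t. indicator {0<..} t * ennreal ((\<Sum>j<N. w j * bump r (\<mu> j * t)) powr q / t) \<partial>lborel)"
    using \<mu> by (intro nn_integral_cong)
      (simp add: H_def indicator_def bump_eq powr_mult sum_distrib_left mult_ac)
  also have "\<dots> \<le> ennreal (G powr (q - 1) * (r + r / (r - 1)) * (\<Sum>j<N. w j powr q))"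
    by (rule nn_integral_bump_sum_powr_le[OF r q \<mu> w G])
  finally show ?thesis .
qed

section \<open>Lacunary blocks and their Laplace transforms\<close>

locale laplace_blocks =
  fixes p :: real
  assumes p_gt_1: "1 < p"
begin

definition p' :: real where "p' = p / (p - 1)"

lemma p'_gt_1: "1 < p'"
  using p_gt_1 by (simp add: p'_def)

lemma inverse_p': "1 / p' = 1 - 1/p"
  using p_gt_1 by (simp add: p'_def field_simps)

lemma one_minus_inverse_p': "1 - 1/p' = 1/p"
  by (simp add: inverse_p')

text \<open>With \<open>ratio powr (1/p)\<close> and \<open>ratio powr (1/p')\<close> at least 1000, the interaction between
  different blocks decays like \<open>(1/1000) ^ \<bar>j - k\<bar>\<close>, small enough for \<open>sum_powr_le_almost_diagonal\<close>.\<close>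

definition ratio :: real where "ratio = 1000 powr (p * p')"

lemma ratio_powr_inverse_p: "1000 \<le> ratio powr (1/p)"
  and ratio_powr_inverse_p': "1000 \<le> ratio powr (1/p')"
proof -
  have "ratio powr (1/p) = 1000 powr p'" "ratio powr (1/p') = 1000 powr p"
    using p_gt_1 p'_gt_1 by (simp_all add: ratio_def powr_powr)
  then show "1000 \<le> ratio powr (1/p)" "1000 \<le> ratio powr (1/p')"
    using p_gt_1 p'_gt_1 powr_mono[of 1 _ "1000::real"] by auto
qed

lemma ratio_gt_2: "2 < ratio"
proof -
  have "1 \<le> ratio" using p_gt_1 p'_gt_1 by (simp add: ratio_def ge_one_powr_ge_zero)
  then have "ratio powr (1/p) \<le> ratio powr 1"
    using p_gt_1 by (intro powr_mono) auto
  then show ?thesis using ratio_powr_inverse_p by (simp add: ratio_def)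
qed

definition scale :: "nat \<Rightarrow> real" where "scale k = ratio ^ k"

lemma scale_pos: "0 < scale k"
  using ratio_gt_2 by (simp add: scale_def)

lemma scale_gap: "j < k \<Longrightarrow> ratio * scale j \<le> scale k"
  using ratio_gt_2 by (simp add: scale_def power_increasing flip: power_Suc)

lemma scale_gap_reciprocal: "j < k \<Longrightarrow> ratio * (1 / (2 * scale k)) \<le> 1 / (2 * scale j)"
  using scale_gap[of j k] scale_pos[of j] scale_pos[of k] by (simp add: field_simps)

lemma scale_quotient: "scale j / scale k = ratio powr (of_int (int j - int k))"
  using ratio_gt_2 by (simp add: scale_def powr_diff powr_realpow)

definition block :: "nat \<Rightarrow> real \<Rightarrow> real" where
  "block k x = scale k powr (- 1/p) * indicator {scale k .. 2 * scale k} x"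

definition block_sum :: "(nat \<Rightarrow> real) \<Rightarrow> nat \<Rightarrow> real \<Rightarrow> real" where
  "block_sum c N x = (\<Sum>k<N. c k * block k x)"

definition block_span :: "(real \<Rightarrow> real) set" where
  "block_span = {block_sum c N | c N. True}"

definition laplace_block :: "nat \<Rightarrow> real \<Rightarrow> real" where
  "laplace_block k t = scale k powr (- 1/p) * ((exp (- (scale k * t)) - exp (- (2 * scale k * t))) / t)"

lemma block_eq_0:
  assumes x: "x \<in> {scale k .. 2 * scale k}" and "j \<noteq> k"
  shows "block j x = 0"
proof -
  have separated: "2 * scale i < scale l" if "i < l" for i l
  proof -
    have "2 * scale i < ratio * scale i" using ratio_gt_2 scale_pos[of i] by simp
    then show ?thesis using scale_gap[OF that] by linarith
  qed
  have "x \<notin> {scale j .. 2 * scale j}"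
  proof (cases "j < k")
    case True
    then show ?thesis using separated[OF True] x by auto
  next
    case False
    then have "k < j" using \<open>j \<noteq> k\<close> by simp
    then show ?thesis using separated[of k j] x by auto
  qed
  then show ?thesis by (simp add: block_def)
qed

lemma block_sum_on_block:
  assumes "k < N" "x \<in> {scale k .. 2 * scale k}"
  shows "block_sum c N x = c k * scale k powr (- 1/p)"
proof -
  have "block_sum c N x = (\<Sum>j\<in>{k}. c j * block j x)"
    unfolding block_sum_def using assms block_eq_0 by (intro sum.mono_neutral_right) auto
  then show ?thesis using assms(2) by (simp add: block_def)
qed

lemma abs_block_le:
  assumes "0 < x"
  shows "\<bar>block k x\<bar> \<le> scale k powr (- 1/p) * min 1 (2 * scale k / x)"
  using assms scale_pos[of k] by (auto simp: block_def indicator_def field_simps)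

lemma block_sum_measurable [measurable]: "block_sum c N \<in> borel_measurable borel"
  unfolding block_sum_def[abs_def] block_def by measurable

lemma laplace_block_sum:
  assumes t: "0 < t"
  shows "laplace (block_sum c N) t = (\<Sum>k<N. c k * laplace_block k t)"
proof -
  let ?I = "\<lambda>k s. indicator {scale k .. 2 * scale k} s *\<^sub>R exp (- t * s)"
  have integrable: "integrable lborel (?I k)" for k
    using borel_integrable_atLeastAtMost'[of "scale k" "2 * scale k" "\<lambda>s. exp (- t * s)"]
    by (simp add: set_integrable_def continuous_intros)
  have "indicator {0<..} s *\<^sub>R (block_sum c N s * exp (- t * s))
      = (\<Sum>k<N. (c k * scale k powr (- 1/p)) * ?I k s)" for s
    using scale_pos by (cases "0 < s")
      (auto simp: block_sum_def block_def indicator_def sum_distrib_left sum_distrib_right mult_ac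
        intro!: sum.neutral)
  then have "laplace (block_sum c N) t = integral\<^sup>L lborel (\<lambda>s. \<Sum>k<N. (c k * scale k powr (- 1/p)) * ?I k s)"
    by (simp add: laplace_def set_lebesgue_integral_def)
  also have "\<dots> = (\<Sum>k<N. (c k * scale k powr (- 1/p)) * integral\<^sup>L lborel (?I k))"
    using integrable by simp
  also have "\<dots> = (\<Sum>k<N. c k * laplace_block k t)"
    unfolding integral_exp_doubling_interval[OF scale_pos t] laplace_block_def by (simp add: mult_ac)
  finally show ?thesis .
qed

lemma laplace_block_sum_measurable: "laplace (block_sum c N) \<in> borel_measurable pos_measure"
proof -
  have "(\<lambda>t. \<Sum>k<N. c k * laplace_block k t) \<in> borel_measurable lborel"
    unfolding laplace_block_def by measurable
  then have "(\<lambda>t. \<Sum>k<N. c k * laplace_block k t) \<in> borel_measurable pos_measure"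
    unfolding pos_measure_def by (rule measurable_restrict_space1)
  moreover have "\<And>t. t \<in> space pos_measure \<Longrightarrow> (\<Sum>k<N. c k * laplace_block k t) = laplace (block_sum c N) t"
    by (simp add: laplace_block_sum)
  ultimately show ?thesis by (rule measurable_cong[THEN iffD1, rotated])
qed

lemma laplace_block_bounds:
  assumes t: "0 < t"
  shows laplace_block_nonneg: "0 \<le> laplace_block k t"
    and laplace_block_le: "laplace_block k t \<le> scale k powr (1/p') * min 1 (1 / (scale k * t))"
    and laplace_block_ge: "scale k powr (1/p') * exp (- (2 * scale k * t)) \<le> laplace_block k t"
proof -
  let ?a = "scale k"
  have a: "0 < ?a" by (rule scale_pos)
  have "?a powr (1/p') = ?a powr (1 + (- 1/p))" by (simp add: inverse_p')
  also have "\<dots> = ?a powr 1 * ?a powr (- 1/p)" by (rule powr_add)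
  finally have weight: "?a powr (- 1/p) * ?a = ?a powr (1/p')" using a by simp
  have "?a * t * exp (- (2 * (?a * t))) / t \<le> (exp (- (?a * t)) - exp (- (2 * (?a * t)))) / t"
    using t by (intro divide_right_mono exp_diff_ge) auto
  then have lower: "?a * exp (- (2 * ?a * t)) \<le> (exp (- (?a * t)) - exp (- (2 * ?a * t))) / t"
    using t by (simp add: mult_ac)
  have "(exp (- (?a * t)) - exp (- (2 * (?a * t)))) / t \<le> min (?a * t) 1 / t"
    using a t by (intro divide_right_mono exp_diff_le) auto
  also have "\<dots> = min ?a (1 / t)" using a t by (simp add: min_divide_distrib_right)
  also have "\<dots> = ?a * min 1 (1 / (?a * t))" using a by (simp add: min_mult_distrib_left)
  finally have upper: "(exp (- (?a * t)) - exp (- (2 * ?a * t))) / t \<le> ?a * min 1 (1 / (?a * t))"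
    by (simp add: mult_ac)
  show "?a powr (1/p') * exp (- (2 * ?a * t)) \<le> laplace_block k t"
    using mult_left_mono[OF lower, of "?a powr (- 1/p)"] unfolding laplace_block_def weight[symmetric]
    by (simp add: mult_ac)
  show "laplace_block k t \<le> ?a powr (1/p') * min 1 (1 / (?a * t))"
    using mult_left_mono[OF upper, of "?a powr (- 1/p)"] unfolding laplace_block_def weight[symmetric]
    by (simp add: mult_ac)
  show "0 \<le> laplace_block k t"
    using lower a t unfolding laplace_block_def
    by (intro mult_nonneg_nonneg) (auto intro: order_trans[rotated])
qed

definition cross_term :: "nat \<Rightarrow> nat \<Rightarrow> real" where
  "cross_term k j = (if j = k then 0 else (1/1000) ^ nat \<bar>int j - int k\<bar>)"

lemma cross_term_nonneg: "0 \<le> cross_term k j"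
  by (simp add: cross_term_def)

lemma cross_term_commute: "cross_term k j = cross_term j k"
proof -
  have "\<bar>int j - int k\<bar> = \<bar>int k - int j\<bar>" by (rule abs_minus_commute)
  then show ?thesis by (simp add: cross_term_def)
qed

lemma sum_cross_term_le:
  assumes "k < N"
  shows "(\<Sum>j<N. cross_term k j) \<le> 2 / 999"
proof -
  let ?f = "\<lambda>j. (1/1000::real) ^ nat \<bar>int j - int k\<bar>"
  have "(\<Sum>j<N. cross_term k j) = cross_term k k + (\<Sum>j\<in>{..<N} - {k}. cross_term k j)"
    using assms by (intro sum.remove) auto
  also have "\<dots> = (\<Sum>j\<in>{..<N} - {k}. ?f j)"
    by (simp add: cross_term_def)
  also have "\<dots> = (\<Sum>j<N. ?f j) - ?f k"
    using assms by (simp add: sum_diff1)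
  also have "\<dots> \<le> (1 + 1/1000) / (1 - 1/1000) - 1"
    using sum_power_abs_diff_le[where \<theta> = "1/1000" and m = "int k" and N = N] by simp
  finally show ?thesis by simp
qed

lemma laplace_block_off_diagonal:
  assumes jk: "j \<noteq> k" and x: "1 / (2 * scale k) \<le> x"
  shows "laplace_block j x \<le> 2 * scale k powr (1/p') * cross_term k j"
proof -
  let ?a = "scale j" and ?b = "scale k"
  have a: "0 < ?a" and b: "0 < ?b" by (rule scale_pos)+
  have x0: "0 < x" using x b by (auto intro: less_le_trans[rotated])
  have "1 / (?a * x) \<le> 2 * ?b / ?a"
    using x a b x0 by (simp add: field_simps)
  then have "min 1 (1 / (?a * x)) \<le> min 2 (2 * (?b / ?a))"
    by (intro min.mono) auto
  also have "\<dots> = 2 * min 1 (?b / ?a)" by (simp add: min_mult_distrib_left)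
  finally have "min 1 (1 / (?a * x)) \<le> 2 * min 1 (?b / ?a)" .
  then have "?a powr (1/p') * min 1 (1 / (?a * x)) \<le> ?a powr (1/p') * (2 * min 1 (?b / ?a))"
    by (rule mult_left_mono) simp
  with laplace_block_le[OF x0, of j] have "laplace_block j x \<le> ?a powr (1/p') * (2 * min 1 (?b / ?a))"
    by (rule order_trans)
  also have "\<dots> = 2 * (?b powr (1/p') * bump p' (?a / ?b))"
    using a b by (simp add: bump_eq powr_divide)
  also have "bump p' (?a / ?b) \<le> (1/1000) ^ nat \<bar>int j - int k\<bar>"
    unfolding scale_quotient
    by (rule bump_power_le) (use ratio_gt_2 ratio_powr_inverse_p ratio_powr_inverse_p' in \<open>auto simp: one_minus_inverse_p'\<close>)
  then have "2 * (?b powr (1/p') * bump p' (?a / ?b)) \<le> 2 * (?b powr (1/p') * cross_term k j)"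
    using jk by (simp add: cross_term_def mult_left_mono)
  finally show ?thesis by (simp add: mult_ac)
qed

lemma laplace_block_sum_ge:
  assumes k: "k < N" and x: "x \<in> {1 / (2 * scale k) .. 1 / scale k}"
  shows "scale k powr (1/p') * (\<bar>c k\<bar> / 9 - 2 * (\<Sum>j<N. cross_term k j * \<bar>c j\<bar>))
    \<le> \<bar>laplace (block_sum c N) x\<bar>"
proof -
  let ?A = "scale k powr (1/p')"
  have b: "0 < scale k" by (rule scale_pos)
  have x0: "0 < x" using x b by (auto intro: less_le_trans[rotated])
  have "scale k * x \<le> 1" using x b by (simp add: field_simps)
  then have "exp (- 2) \<le> exp (- (2 * scale k * x))" by simp
  then have "1/9 \<le> exp (- (2 * scale k * x))" using exp_minus_two_ge by linarith
  then have "?A * (1/9) \<le> ?A * exp (- (2 * scale k * x))" by (rule mult_left_mono) simp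
  then have diagonal: "?A / 9 \<le> laplace_block k x" using laplace_block_ge[OF x0, of k] by simp
  have "\<bar>\<Sum>j\<in>{..<N} - {k}. c j * laplace_block j x\<bar> \<le> (\<Sum>j\<in>{..<N} - {k}. \<bar>c j\<bar> * laplace_block j x)"
    using laplace_block_nonneg[OF x0] by (simp add: sum_abs[THEN order_trans] abs_mult)
  also have "\<dots> \<le> (\<Sum>j\<in>{..<N} - {k}. \<bar>c j\<bar> * (2 * ?A * cross_term k j))"
    using laplace_block_off_diagonal x by (intro sum_mono mult_left_mono) auto
  also have "\<dots> = (\<Sum>j<N. \<bar>c j\<bar> * (2 * ?A * cross_term k j))"
    by (intro sum.mono_neutral_left) (auto simp: cross_term_def)
  also have "\<dots> = 2 * ?A * (\<Sum>j<N. cross_term k j * \<bar>c j\<bar>)"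
    by (simp add: sum_distrib_left mult_ac)
  finally have off_diagonal: "\<bar>\<Sum>j\<in>{..<N} - {k}. c j * laplace_block j x\<bar> \<le> 2 * ?A * (\<Sum>j<N. cross_term k j * \<bar>c j\<bar>)" .
  have "laplace (block_sum c N) x = c k * laplace_block k x + (\<Sum>j\<in>{..<N} - {k}. c j * laplace_block j x)"
    using k x0 by (simp add: laplace_block_sum sum.remove)
  then have "\<bar>c k\<bar> * laplace_block k x - \<bar>\<Sum>j\<in>{..<N} - {k}. c j * laplace_block j x\<bar>
      \<le> \<bar>laplace (block_sum c N) x\<bar>"
    using laplace_block_nonneg[OF x0, of k] by (simp add: abs_mult)
  moreover have "\<bar>c k\<bar> * (?A / 9) \<le> \<bar>c k\<bar> * laplace_block k x" using diagonal by (intro mult_left_mono) auto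
  ultimately show ?thesis using off_diagonal by (simp add: algebra_simps)
qed

text \<open>On \<open>[1/(2 scale k), 1/scale k]\<close>, \<open>laplace_block k\<close> is at least \<open>scale k powr (1/p') / 9\<close>
  (as \<open>exp (-2) \<ge> 1/9\<close>), while each other \<open>laplace_block j\<close> is at most \<open>2 * scale k powr (1/p') * cross_term k j\<close>.\<close>

definition margin :: "(nat \<Rightarrow> real) \<Rightarrow> nat \<Rightarrow> nat \<Rightarrow> real" where
  "margin c N k = max 0 (\<bar>c k\<bar> / 9 - 2 * (\<Sum>j<N. cross_term k j * \<bar>c j\<bar>))"

lemma margin_nonneg: "0 \<le> margin c N k"
  by (simp add: margin_def)

lemma laplace_block_sum_ge_margin:
  "k < N \<Longrightarrow> x \<in> {1 / (2 * scale k) .. 1 / scale k} \<Longrightarrow>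
    scale k powr (1/p') * margin c N k \<le> \<bar>laplace (block_sum c N) x\<bar>"
  using laplace_block_sum_ge[of k N x c] by (auto simp: margin_def max_def)

lemma sum_powr_le_margin:
  assumes q: "1 \<le> q"
  shows "(\<Sum>k<N. \<bar>c k\<bar> powr q) \<le> 18 powr q * (\<Sum>k<N. margin c N k powr q)"
proof -
  define M where "M k j = 18 * cross_term k j" for k j
  have margin_eq: "margin c N k = max 0 (\<bar>c k\<bar> / 9 - (\<Sum>j<N. M k j * (\<bar>c j\<bar> / 9)))" for k
    by (simp add: margin_def M_def sum_distrib_left mult_ac)
  have "(\<Sum>k<N. (\<bar>c k\<bar> / 9) powr q) \<le> 2 powr q * (\<Sum>k<N. margin c N k powr q)"
    unfolding margin_eq
  proof (rule sum_powr_le_almost_diagonal)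
    show "(\<Sum>j<N. M k j) \<le> 1/4" if "k < N" for k
      using sum_cross_term_le[OF that] by (simp add: M_def flip: sum_distrib_left)
    show "(\<Sum>k<N. M k j) \<le> 1/4" if "j < N" for j
      using sum_cross_term_le[OF that] by (simp add: M_def cross_term_commute[of _ j] flip: sum_distrib_left)
  qed (use q in \<open>auto simp: M_def cross_term_nonneg\<close>)
  then have "9 powr q * (\<Sum>k<N. (\<bar>c k\<bar> / 9) powr q) \<le> 9 powr q * (2 powr q * (\<Sum>k<N. margin c N k powr q))"
    by (rule mult_left_mono) simp
  then show ?thesis
    by (simp add: powr_divide sum_distrib_left powr_mult[of 9 2, simplified] mult_ac)
qed

lemma sum_bump_scale_le: "0 < t \<Longrightarrow> (\<Sum>j<N. bump p' (scale j * t)) \<le> 3 * ratio powr (1/p')"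
  unfolding scale_def using p'_gt_1 ratio_gt_2 ratio_powr_inverse_p ratio_powr_inverse_p'
  by (intro sum_bump_geometric_le) (auto simp: one_minus_inverse_p')

lemma block_sum_lorentz_integral_upper:
  assumes q: "1 \<le> q"
  obtains B where "0 < B" "\<And>c N. lorentz_integral p q (block_sum c N) \<le> ennreal (B * (\<Sum>k<N. \<bar>c k\<bar> powr q))"
proof -
  define G where "G = 3 * ratio powr (1/p')"
  define B where "B = G powr (q - 1) * (p + p / (p - 1)) * 2 powr (q/p)"
  have "lorentz_integral p q (block_sum c N) \<le> ennreal (B * (\<Sum>k<N. \<bar>c k\<bar> powr q))" for c N
  proof -
    have "lorentz_integral p q (block_sum c N)
        \<le> ennreal (G powr (q - 1) * (p + p / (p - 1)) * (\<Sum>k<N. (2 powr (1/p) * \<bar>c k\<bar>) powr q))"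
    proof (rule lorentz_integral_le_bump_sum[where \<mu> = "\<lambda>j. 1 / (2 * scale j)"])
      fix x :: real assume x: "0 < x"
      have "\<bar>block_sum c N x\<bar> \<le> (\<Sum>j<N. \<bar>c j\<bar> * \<bar>block j x\<bar>)"
        unfolding block_sum_def by (rule sum_abs[THEN order_trans]) (simp add: abs_mult)
      also have "\<dots> \<le> (\<Sum>j<N. \<bar>c j\<bar> * (scale j powr (- 1/p) * min 1 (2 * scale j / x)))"
        using abs_block_le[OF x] by (intro sum_mono mult_left_mono) auto
      also have "\<dots> = (\<Sum>j<N. 2 powr (1/p) * \<bar>c j\<bar> * (1 / (2 * scale j)) powr (1/p)
          * min 1 (1 / (1 / (2 * scale j) * x)))"
        using scale_pos by (intro sum.cong refl) (simp add: powr_divide powr_mult powr_minus_divide)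
      finally show "\<bar>block_sum c N x\<bar> \<le> \<dots>" .
      have "(\<Sum>j<N. bump p (1 / (2 * scale j) * x)) = (\<Sum>j<N. bump p' (scale j * (2 / x)))"
        using scale_pos x p_gt_1 bump_inverse[of p "2 * scale _ / x"]
        by (intro sum.cong refl) (simp add: p'_def mult.commute)
      also have "\<dots> \<le> G" using sum_bump_scale_le[of "2 / x"] x by (simp add: G_def)
      finally show "(\<Sum>j<N. bump p (1 / (2 * scale j) * x)) \<le> G" .
    qed (use p_gt_1 q scale_pos in auto)
    then show ?thesis
      by (simp add: B_def powr_mult powr_powr sum_distrib_left mult_ac)
  qed
  moreover have "0 < B" using p_gt_1 ratio_gt_2 unfolding B_def G_def by (intro mult_pos_pos add_pos_pos) auto
  ultimately show thesis by (intro that)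
qed

lemma block_sum_lorentz_integral_lower:
  assumes q: "1 \<le> q"
  obtains A where "0 < A" "\<And>c N. ennreal (A * (\<Sum>k<N. \<bar>c k\<bar> powr q)) \<le> lorentz_integral p q (block_sum c N)"
proof -
  define A where "A = (1 / 2 powr (q/p) - 1 / ratio powr (q/p)) / (q/p)"
  have "ennreal (A * (\<Sum>k<N. \<bar>c k\<bar> powr q)) \<le> lorentz_integral p q (block_sum c N)" for c N
  proof -
    have "ennreal (A * (\<Sum>k<N. (\<bar>c k\<bar> * scale k powr (- 1/p) * scale k powr (1/p)) powr q))
        \<le> lorentz_integral p q (block_sum c N)"
      unfolding A_def
    proof (rule lorentz_integral_ge_separated_blocks[where A = "\<lambda>k. {scale k .. 2 * scale k}"])
      show "\<And>j k. j \<noteq> k \<Longrightarrow> ratio * scale j \<le> scale k \<or> ratio * scale k \<le> scale j"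
        using scale_gap by (metis linorder_neqE_nat)
      show "\<And>k. ennreal (scale k) \<le> emeasure lborel {scale k .. 2 * scale k}"
        using scale_pos by simp
      show "\<And>k. {scale k .. 2 * scale k} \<subseteq> {0<..}"
        using scale_pos by (auto intro: less_le_trans[OF scale_pos])
      show "\<And>k x. k < N \<Longrightarrow> x \<in> {scale k .. 2 * scale k} \<Longrightarrow> \<bar>c k\<bar> * scale k powr (- 1/p) \<le> \<bar>block_sum c N x\<bar>"
        by (simp add: block_sum_on_block abs_mult)
    qed (use p_gt_1 q ratio_gt_2 scale_pos less_imp_le[OF scale_pos] in \<open>auto intro: block_sum_measurable
          measurable_restrict_space1 simp: pos_measure_def\<close>)
    moreover have "\<bar>c k\<bar> * scale k powr (- 1/p) * scale k powr (1/p) = \<bar>c k\<bar>" for k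
      using scale_pos[of k] by (simp add: mult.assoc flip: powr_add)
    ultimately show ?thesis by (simp only:)
  qed
  moreover have "0 < A"
  proof -
    have "2 powr (q/p) < ratio powr (q/p)" using p_gt_1 q ratio_gt_2 by (intro powr_less_mono2) auto
    then show ?thesis using p_gt_1 q by (simp add: A_def frac_less2)
  qed
  ultimately show thesis by (intro that)
qed

lemma laplace_block_sum_lorentz_integral_upper:
  assumes q: "1 \<le> q"
  obtains B where "0 < B"
    "\<And>c N. lorentz_integral p' q (laplace (block_sum c N)) \<le> ennreal (B * (\<Sum>k<N. \<bar>c k\<bar> powr q))"
proof -
  define B where "B = (3 * ratio powr (1/p')) powr (q - 1) * (p' + p' / (p' - 1))"
  have "lorentz_integral p' q (laplace (block_sum c N)) \<le> ennreal (B * (\<Sum>k<N. \<bar>c k\<bar> powr q))" for c N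
    unfolding B_def
  proof (rule lorentz_integral_le_bump_sum[where \<mu> = scale])
    fix x :: real assume x: "0 < x"
    have "\<bar>laplace (block_sum c N) x\<bar> \<le> (\<Sum>j<N. \<bar>c j\<bar> * laplace_block j x)"
      unfolding laplace_block_sum[OF x] using laplace_block_nonneg[OF x]
      by (intro sum_abs[THEN order_trans]) (simp add: abs_mult)
    also have "\<dots> \<le> (\<Sum>j<N. \<bar>c j\<bar> * scale j powr (1/p') * min 1 (1 / (scale j * x)))"
      using laplace_block_le[OF x] by (simp add: sum_mono mult_left_mono mult.assoc)
    finally show "\<bar>laplace (block_sum c N) x\<bar> \<le> \<dots>" .
  qed (use p'_gt_1 q scale_pos sum_bump_scale_le in auto)
  moreover have "0 < B" using p'_gt_1 ratio_gt_2 unfolding B_def by (intro mult_pos_pos add_pos_pos) auto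
  ultimately show thesis by (intro that)
qed

lemma laplace_block_sum_lorentz_integral_lower:
  assumes q: "1 \<le> q"
  obtains A where "0 < A"
    "\<And>c N. ennreal (A * (\<Sum>k<N. \<bar>c k\<bar> powr q)) \<le> lorentz_integral p' q (laplace (block_sum c N))"
proof -
  define \<kappa> where "\<kappa> = (1 / 2 powr (q/p') - 1 / ratio powr (q/p')) / (q/p')"
  define A where "A = \<kappa> / 2 powr (q/p') / 18 powr q"
  have "2 powr (q/p') < ratio powr (q/p')" using p'_gt_1 q ratio_gt_2 by (intro powr_less_mono2) auto
  then have \<kappa>: "0 < \<kappa>" using p'_gt_1 q by (simp add: \<kappa>_def frac_less2)
  have rescale: "(scale k powr (1/p') * m * (1 / (2 * scale k)) powr (1/p')) powr q = m powr q / 2 powr (q/p')"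
    if "0 \<le> m" for k m
  proof -
    have "scale k powr (1/p') * m * (1 / (2 * scale k)) powr (1/p') = m / 2 powr (1/p')"
      using scale_pos[of k] by (simp add: powr_divide powr_mult)
    then show ?thesis using that by (simp add: powr_divide powr_powr)
  qed
  have "ennreal (A * (\<Sum>k<N. \<bar>c k\<bar> powr q)) \<le> lorentz_integral p' q (laplace (block_sum c N))" for c N
  proof -
    have "A * (\<Sum>k<N. \<bar>c k\<bar> powr q) \<le> \<kappa> / 2 powr (q/p') * (\<Sum>k<N. margin c N k powr q)"
      using sum_powr_le_margin[OF q, of c N] \<kappa> by (simp add: A_def field_simps)
    also have "\<dots> = \<kappa> * (\<Sum>k<N. (scale k powr (1/p') * margin c N k * (1 / (2 * scale k)) powr (1/p')) powr q)"
      unfolding rescale[OF margin_nonneg] by (simp add: sum_divide_distrib[symmetric])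
    finally have "ennreal (A * (\<Sum>k<N. \<bar>c k\<bar> powr q))
        \<le> ennreal (\<kappa> * (\<Sum>k<N. (scale k powr (1/p') * margin c N k * (1 / (2 * scale k)) powr (1/p')) powr q))"
      by (rule ennreal_leI)
    also have "\<dots> \<le> lorentz_integral p' q (laplace (block_sum c N))"
      unfolding \<kappa>_def
    proof (rule lorentz_integral_ge_separated_blocks[where A = "\<lambda>k. {1 / (2 * scale k) .. 1 / scale k}"])
      show "\<And>j k. j \<noteq> k \<Longrightarrow> ratio * (1 / (2 * scale j)) \<le> 1 / (2 * scale k) \<or>
          ratio * (1 / (2 * scale k)) \<le> 1 / (2 * scale j)"
        using scale_gap_reciprocal by (metis linorder_neqE_nat)
      show "\<And>k. ennreal (1 / (2 * scale k)) \<le> emeasure lborel {1 / (2 * scale k) .. 1 / scale k}"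
        using scale_pos by (simp add: field_simps)
      show "\<And>k. {1 / (2 * scale k) .. 1 / scale k} \<subseteq> {0<..}"
        using scale_pos by (auto intro: less_le_trans[rotated])
      show "\<And>k x. k < N \<Longrightarrow> x \<in> {1 / (2 * scale k) .. 1 / scale k}
          \<Longrightarrow> scale k powr (1/p') * margin c N k \<le> \<bar>laplace (block_sum c N) x\<bar>"
        by (rule laplace_block_sum_ge_margin)
    qed (use p'_gt_1 q ratio_gt_2 scale_pos margin_nonneg in \<open>auto intro: laplace_block_sum_measurable\<close>)
    finally show ?thesis .
  qed
  moreover have "0 < A" using \<kappa> by (simp add: A_def)
  ultimately show thesis by (intro that)
qed

lemma lorentz_norms_comparable:
  assumes q: "1 \<le> q"
  obtains \<kappa> K where "0 < \<kappa>"
    "\<And>c N. \<kappa> * lorentz_norm p q (block_sum c N) \<le> lorentz_norm p' q (laplace (block_sum c N))"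
    "\<And>c N. lorentz_norm p' q (laplace (block_sum c N)) \<le> K * lorentz_norm p q (block_sum c N)"
proof -
  obtain A where A: "0 < A"
    and X_lower: "\<And>c N. ennreal (A * (\<Sum>k<N. \<bar>c k\<bar> powr q)) \<le> lorentz_integral p q (block_sum c N)"
    using block_sum_lorentz_integral_lower[OF q] by blast
  obtain B where B: "0 < B"
    and X_upper: "\<And>c N. lorentz_integral p q (block_sum c N) \<le> ennreal (B * (\<Sum>k<N. \<bar>c k\<bar> powr q))"
    using block_sum_lorentz_integral_upper[OF q] by blast
  obtain A' where A': "0 < A'"
    and Y_lower: "\<And>c N. ennreal (A' * (\<Sum>k<N. \<bar>c k\<bar> powr q)) \<le> lorentz_integral p' q (laplace (block_sum c N))"
    using laplace_block_sum_lorentz_integral_lower[OF q] by blast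
  obtain B' where B': "0 < B'"
    and Y_upper: "\<And>c N. lorentz_integral p' q (laplace (block_sum c N)) \<le> ennreal (B' * (\<Sum>k<N. \<bar>c k\<bar> powr q))"
    using laplace_block_sum_lorentz_integral_upper[OF q] by blast
  note bounds = powr_comparable_of_common_bounds[OF _ _ A B A' B' X_lower X_upper Y_lower Y_upper]
  show thesis
  proof (rule that)
    show "0 < (A' / B) powr (1/q)" using A' B by simp
    show "(A' / B) powr (1/q) * lorentz_norm p q (block_sum c N) \<le> lorentz_norm p' q (laplace (block_sum c N))"
      for c N unfolding lorentz_norm_def using q by (intro bounds(1)) (auto intro: sum_nonneg)
    show "lorentz_norm p' q (laplace (block_sum c N)) \<le> (B' / A) powr (1/q) * lorentz_norm p q (block_sum c N)"
      for c N unfolding lorentz_norm_def using q by (intro bounds(2)) (auto intro: sum_nonneg)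
  qed
qed

lemma block_sum_in_lorentz_space:
  assumes "1 \<le> q"
  shows "block_sum c N \<in> lorentz_space p q"
proof -
  obtain B where "lorentz_integral p q (block_sum c N) \<le> ennreal (B * (\<Sum>k<N. \<bar>c k\<bar> powr q))"
    using block_sum_lorentz_integral_upper[OF assms] by metis
  then have "lorentz_integral p q (block_sum c N) < \<infinity>"
    unfolding infinity_ennreal_def using ennreal_less_top by (rule le_less_trans)
  moreover have "block_sum c N \<in> borel_measurable pos_measure"
    unfolding pos_measure_def by (rule measurable_restrict_space1) simp
  ultimately show ?thesis by (simp add: lorentz_space_def)
qed

lemma laplace_block_sum_in_lorentz_space:
  assumes "1 \<le> q"
  shows "laplace (block_sum c N) \<in> lorentz_space p' q"
proof -
  obtain B where "lorentz_integral p' q (laplace (block_sum c N)) \<le> ennreal (B * (\<Sum>k<N. \<bar>c k\<bar> powr q))"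
    using laplace_block_sum_lorentz_integral_upper[OF assms] by metis
  then have "lorentz_integral p' q (laplace (block_sum c N)) < \<infinity>"
    unfolding infinity_ennreal_def using ennreal_less_top by (rule le_less_trans)
  then show ?thesis using laplace_block_sum_measurable by (simp add: lorentz_space_def)
qed

lemma block_sum_extend:
  assumes "N \<le> L"
  shows "block_sum c N = block_sum (\<lambda>k. if k < N then c k else 0) L"
  unfolding block_sum_def using assms by (intro ext sum.mono_neutral_cong_left) auto

lemma block_span_subspace: "fun_subspace block_span"
  unfolding fun_subspace_def
proof (intro conjI ballI allI)
  show "(\<lambda>x. 0) \<in> block_span"
    unfolding block_span_def by (rule CollectI, rule exI[of _ "\<lambda>_. 0"]) (auto simp: block_sum_def fun_eq_iff)
next
  fix f g assume "f \<in> block_span" "g \<in> block_span"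
  then obtain c N d M where f: "f = block_sum c N" and g: "g = block_sum d M"
    unfolding block_span_def by blast
  have "f = block_sum (\<lambda>k. if k < N then c k else 0) (N + M)"
    "g = block_sum (\<lambda>k. if k < M then d k else 0) (N + M)"
    using f g by (simp_all add: block_sum_extend)
  then have "(\<lambda>x. f x + g x)
      = block_sum (\<lambda>k. (if k < N then c k else 0) + (if k < M then d k else 0)) (N + M)"
    by (simp add: block_sum_def distrib_right sum.distrib fun_eq_iff)
  then show "(\<lambda>x. f x + g x) \<in> block_span" unfolding block_span_def by blast
next
  fix a :: real and f assume "f \<in> block_span"
  then obtain c N where "f = block_sum c N" unfolding block_span_def by blast
  then have "(\<lambda>x. a * f x) = block_sum (\<lambda>k. a * c k) N"
    by (simp add: block_sum_def sum_distrib_left mult.assoc fun_eq_iff)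
  then show "(\<lambda>x. a * f x) \<in> block_span" unfolding block_span_def by blast
qed

lemma block_span_infinite_dim: "infinite_dim_ae block_span"
  unfolding infinite_dim_ae_def
proof (intro allI exI[of _ block] conjI impI)
  fix i :: nat
  have "block i = block_sum (\<lambda>k. if k = i then 1 else 0) (Suc i)"
    by (simp add: block_sum_def fun_eq_iff if_distrib sum.delta cong: if_cong)
  then show "block i \<in> block_span" unfolding block_span_def by blast
next
  fix n i :: nat and c :: "nat \<Rightarrow> real"
  assume AE: "AE x in pos_measure. (\<Sum>i<n. c i * block i x) = 0" and i: "i < n"
  let ?I = "{scale i .. 2 * scale i}"
  have I: "?I \<subseteq> {0<..}" using scale_pos by (auto intro: less_le_trans[OF scale_pos])
  have "AE x in pos_measure. c i = 0 \<or> x \<notin> ?I"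
    using AE by eventually_elim (use i scale_pos[of i] in \<open>auto simp: block_sum_on_block[where k = i and N = n and c = c, unfolded block_sum_def]\<close>)
  moreover have "\<not> (AE x in pos_measure. x \<notin> ?I)"
  proof
    assume "AE x in pos_measure. x \<notin> ?I"
    moreover have "?I \<in> sets pos_measure" using I by (simp add: pos_measure_def sets_restrict_space_iff)
    ultimately have "emeasure pos_measure ?I = 0" using I by (subst (asm) AE_iff_measurable) auto
    moreover have "emeasure pos_measure ?I = scale i"
      using I scale_pos[of i] by (simp add: pos_measure_def emeasure_restrict_space)
    ultimately show False using scale_pos[of i] by simp
  qed
  ultimately show "c i = 0" by (cases "c i = 0") auto
qed

end

theorem theorem2:
  fixes p q :: real
  assumes "1 < p" and "1 < q"
  shows "\<not> strictly_singular (lorentz_space p q) (lorentz_norm p q)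
            (lorentz_space (p / (p - 1)) q) (lorentz_norm (p / (p - 1)) q) laplace"
proof -
  interpret laplace_blocks p using assms(1) by unfold_locales
  have q: "1 \<le> q" using assms(2) by simp
  obtain \<kappa> K where "0 < \<kappa>"
    and lower: "\<And>c N. \<kappa> * lorentz_norm p q (block_sum c N) \<le> lorentz_norm p' q (laplace (block_sum c N))"
    and upper: "\<And>c N. lorentz_norm p' q (laplace (block_sum c N)) \<le> K * lorentz_norm p q (block_sum c N)"
    using lorentz_norms_comparable[OF q] by blast
  have "block_span \<subseteq> lorentz_space p q" "\<forall>f\<in>block_span. laplace f \<in> lorentz_space p' q"
    using block_sum_in_lorentz_space[OF q] laplace_block_sum_in_lorentz_space[OF q]
    by (auto simp: block_span_def)
  moreover have "\<forall>f\<in>block_span. \<kappa> * lorentz_norm p q f \<le> lorentz_norm p' q (laplace f)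
      \<and> lorentz_norm p' q (laplace f) \<le> K * lorentz_norm p q f"
    using lower upper by (auto simp: block_span_def)
  moreover have "p / (p - 1) = p'" by (simp add: p'_def)
  ultimately show ?thesis
    unfolding strictly_singular_def not_not using \<open>0 < \<kappa>\<close> block_span_subspace block_span_infinite_dim
    by (intro exI[of _ block_span]) auto
qed

end
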